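(* Let $1\le t\le n$. Let $M_t$ be the real matrix with rows and columns indexed by the nonempty subsets of $[n]$ of size at most $t$, ordered by nondecreasing size, with entries $M_t[a,b]=2^{|a\cap b|}$; for $1\le r<t$, $M_r$ is the upper-left principal submatrix of $M_t$ indexed by the sets of size at most $r$. For $t\ge2$, the Schur complement $M_t/M_{t-1}$ of $M_{t-1}$ in $M_t$ is well defined (i.e. $M_{t-1}$ is invertible) and $$M_t/M_{t-1}=I+\frac{\mathbf 1_t\mathbf 1_t^T}{\alpha_{t-1}},$$ where $\mathbf 1_t$ is the all-ones vector of length $\binom nt$ and $\alpha_k=\sum_{j=0}^k\binom nj$. For $t=1$, with the convention $M_1/M_0:=M_1$, the same formula holds, i.e. $M_1=I+\mathbf 1_1\mathbf 1_1^T$.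
   Context: For a block matrix $\begin{pmatrix}A&B\\ C&D'\end{pmatrix}$ with $A$ invertible, the Schur complement of $A$ is $D'-CA^{-1}B$. Here $M_t/M_{t-1}$ is indexed by the subsets of $[n]$ of size exactly $t$. *)

theory Defs
  imports Complex_Main
begin

text \<open>Matrices are represented as real-valued functions of two indices,
  restricted to an explicit finite index set.  Indices are subsets of [n] = {1..n}.\<close>

definition subsets_upto :: "nat \<Rightarrow> nat \<Rightarrow> nat set set" where
  "subsets_upto n r = {a. a \<subseteq> {1..n} \<and> a \<noteq> {} \<and> card a \<le> r}"

definition subsets_eq :: "nat \<Rightarrow> nat \<Rightarrow> nat set set" where
  "subsets_eq n r = {a. a \<subseteq> {1..n} \<and> card a = r}"

definition Mentry :: "nat set \<Rightarrow> nat set \<Rightarrow> real" where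
  "Mentry a b = 2 ^ card (a \<inter> b)"

definition is_inverse_on :: "'i set \<Rightarrow> ('i \<Rightarrow> 'i \<Rightarrow> real) \<Rightarrow> ('i \<Rightarrow> 'i \<Rightarrow> real) \<Rightarrow> bool" where
  "is_inverse_on I A B \<longleftrightarrow>
     (\<forall>a\<in>I. \<forall>b\<in>I. (\<Sum>c\<in>I. A a c * B c b) = (if a = b then 1 else 0)) \<and>
     (\<forall>a\<in>I. \<forall>b\<in>I. (\<Sum>c\<in>I. B a c * A c b) = (if a = b then 1 else 0))"

definition invertible_on :: "'i set \<Rightarrow> ('i \<Rightarrow> 'i \<Rightarrow> real) \<Rightarrow> bool" where
  "invertible_on I A \<longleftrightarrow> (\<exists>B. is_inverse_on I A B)"

definition inverse_on :: "'i set \<Rightarrow> ('i \<Rightarrow> 'i \<Rightarrow> real) \<Rightarrow> ('i \<Rightarrow> 'i \<Rightarrow> real)" where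
  "inverse_on I A = (SOME B. is_inverse_on I A B)"

text \<open>Schur complement of the principal block indexed by I in a matrix A
  (evaluated at indices a, b of the complementary block): D - C A_I^{-1} B.
  For I = {} this is just A itself (convention M_1/M_0 = M_1).\<close>
definition schur_on :: "'i set \<Rightarrow> ('i \<Rightarrow> 'i \<Rightarrow> real) \<Rightarrow> 'i \<Rightarrow> 'i \<Rightarrow> real" where
  "schur_on I A a b = A a b - (\<Sum>c\<in>I. \<Sum>d\<in>I. A a c * inverse_on I A c d * A d b)"

definition alpha :: "nat \<Rightarrow> nat \<Rightarrow> real" where
  "alpha n k = (\<Sum>j\<le>k. real (n choose j))"

end

theory Submission
  imports Defs
begin

(* Let F be the family of nonempty subsets of {1..n} of size at most r = t - 1, and W the zeta
   matrix W[c,p] = [p \<subseteq> c] on F.  Counting the subsets of c \<inter> d gives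
   2^|c \<inter> d| = 1 + (W W^T)[c,d], and by Moebius inversion the all-ones vector on F is W g
   with g p = -(-1)^|p|.  Hence M_r = W (Id + g g^T) W^T, which the Sherman-Morrison formula
   inverts with the constant 1 + |g|^2 = 1 + |F| = alpha_r.  The columns of M_t indexed by
   the t-sets have the same shape 1 + W w, so the Schur complement reduces to quadratic forms
   in g + w, and these evaluate to I + J / alpha_r. *)

lemma sum_neg_one_power_interval:
  assumes "finite S" "U \<subseteq> S"
  shows "(\<Sum>T | U \<subseteq> T \<and> T \<subseteq> S. (-1::real) ^ card T) = (if U = S then (-1) ^ card S else 0)"
proof (cases "U = S")
  case True
  then have "{T. U \<subseteq> T \<and> T \<subseteq> S} = {S}" by auto
  with True show ?thesis by simp
next
  case False
  with assms(2) have "U \<subset> S" by auto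
  have "finite {T. U \<subseteq> T \<and> T \<subseteq> S}"
    using assms(1) by (rule rev_finite_subset[OF finite_Pow_iff[THEN iffD2]]) auto
  then have "(\<Sum>T | U \<subseteq> T \<and> T \<subseteq> S. (-1::real) ^ card T) = 0"
    by (rule sum_alternating_cancels)
      (use card_subsupersets_even_odd[OF assms(1) \<open>U \<subset> S\<close>] in \<open>simp add: conj_commute conj_left_commute\<close>)
  with False show ?thesis by simp
qed

lemma sum_neg_one_power_nonempty_subsets:
  assumes "finite A" "A \<noteq> {}"
  shows "(\<Sum>T\<in>Pow A - {{}}. (-1::real) ^ card T) = -1"
proof -
  have "(\<Sum>T\<in>Pow A. (-1::real) ^ card T) = 0"
    using sum_neg_one_power_interval[of A "{}"] assms by (simp add: Pow_def)
  then show ?thesis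
    using assms(1) by (simp add: sum.remove[of "Pow A" "{}"])
qed

lemma neg_one_power_diff: "k \<le> m \<Longrightarrow> (-1::real) ^ (m - k) = (-1) ^ m * (-1) ^ k"
  by (simp flip: neg_one_power_add_eq_neg_one_power_diff power_add)

definition subset_zeta :: "'a set \<Rightarrow> 'a set \<Rightarrow> real" where
  "subset_zeta c p = (if p \<subseteq> c then 1 else 0)"

definition subset_mobius :: "'a set \<Rightarrow> 'a set \<Rightarrow> real" where
  "subset_mobius q c = (if c \<subseteq> q then (-1) ^ (card q - card c) else 0)"

lemma sum_subset_zeta:
  assumes "finite I"
  shows "(\<Sum>p\<in>I. subset_zeta B p * f p) = (\<Sum>p \<in> {p \<in> I. p \<subseteq> B}. f p)"
  unfolding sum.inter_filter[OF assms] by (rule sum.cong) (auto simp: subset_zeta_def)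

lemma is_inverse_on_subset_zeta_mobius:
  assumes "finite I" and finite_members: "\<And>c. c \<in> I \<Longrightarrow> finite c"
    and convex: "\<And>lo m hi. lo \<in> I \<Longrightarrow> hi \<in> I \<Longrightarrow> lo \<subseteq> m \<Longrightarrow> m \<subseteq> hi \<Longrightarrow> m \<in> I"
  shows "is_inverse_on I subset_zeta subset_mobius"
proof -
  have interval: "(\<Sum>m\<in>I. if lo \<subseteq> m \<and> m \<subseteq> hi then (-1::real) ^ card m else 0)
      = (if lo = hi then (-1) ^ card hi else 0)" if "lo \<in> I" "hi \<in> I" for lo hi
  proof (cases "lo \<subseteq> hi")
    case True
    have "{m \<in> I. lo \<subseteq> m \<and> m \<subseteq> hi} = {m. lo \<subseteq> m \<and> m \<subseteq> hi}"
      using convex that by blast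
    then show ?thesis
      using \<open>finite I\<close> sum_neg_one_power_interval[OF finite_members[OF \<open>hi \<in> I\<close>] True]
      by (simp flip: sum.inter_filter)
  next
    case False
    then have "lo \<noteq> hi" by auto
    moreover have "(\<Sum>m\<in>I. if lo \<subseteq> m \<and> m \<subseteq> hi then (-1::real) ^ card m else 0) = 0"
      using False by (intro sum.neutral) auto
    ultimately show ?thesis by simp
  qed
  have sign: "(-1::real) ^ (card hi - card lo) = (-1) ^ card hi * (-1) ^ card lo"
    if "lo \<subseteq> hi" "hi \<in> I" for lo hi
    using neg_one_power_diff[OF card_mono[OF finite_members[OF that(2)] that(1)]] .
  have "(\<Sum>c\<in>I. subset_zeta a c * subset_mobius c b) = (if a = b then 1 else 0)"
    if "a \<in> I" "b \<in> I" for a b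
  proof -
    have "(\<Sum>c\<in>I. subset_zeta a c * subset_mobius c b)
        = (-1) ^ card b * (\<Sum>c\<in>I. if b \<subseteq> c \<and> c \<subseteq> a then (-1) ^ card c else 0)"
      unfolding sum_distrib_left
      by (rule sum.cong) (auto simp: subset_zeta_def subset_mobius_def sign mult.commute)
    then show ?thesis
      using interval[OF that(2,1)] by (simp flip: power_add)
  qed
  moreover have "(\<Sum>c\<in>I. subset_mobius a c * subset_zeta c b) = (if a = b then 1 else 0)"
    if "a \<in> I" "b \<in> I" for a b
  proof -
    have "(\<Sum>c\<in>I. subset_mobius a c * subset_zeta c b)
        = (-1) ^ card a * (\<Sum>c\<in>I. if b \<subseteq> c \<and> c \<subseteq> a then (-1) ^ card c else 0)"
      unfolding sum_distrib_left
      using that by (intro sum.cong) (auto simp: subset_zeta_def subset_mobius_def sign)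
    then show ?thesis
      using interval[OF that(2,1)] by (auto simp flip: power_add)
  qed
  ultimately show ?thesis
    unfolding is_inverse_on_def by blast
qed

lemma is_inverse_on_cong:
  assumes "\<And>a b. a \<in> I \<Longrightarrow> b \<in> I \<Longrightarrow> A a b = A' a b"
  shows "is_inverse_on I A B \<longleftrightarrow> is_inverse_on I A' B"
  unfolding is_inverse_on_def using assms by (simp cong: sum.cong)

lemma inverse_on_eq:
  assumes "finite I" "is_inverse_on I A B" "a \<in> I" "b \<in> I"
  shows "inverse_on I A a b = B a b"
proof -
  let ?B' = "inverse_on I A"
  have B': "is_inverse_on I A ?B'"
    unfolding inverse_on_def using assms(2) by (rule someI[of "is_inverse_on I A"])
  have "?B' a b = (\<Sum>c\<in>I. if c = b then ?B' a c else 0)"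
    using assms by simp
  also have "\<dots> = (\<Sum>c\<in>I. ?B' a c * (\<Sum>d\<in>I. A c d * B d b))"
    using assms(2,4) unfolding is_inverse_on_def by (intro sum.cong) simp_all
  also have "\<dots> = (\<Sum>d\<in>I. (\<Sum>c\<in>I. ?B' a c * A c d) * B d b)"
    by (simp add: sum_distrib_left sum_distrib_right mult.assoc) (rule sum.swap)
  also have "\<dots> = (\<Sum>d\<in>I. if a = d then B d b else 0)"
    using B' assms(3) unfolding is_inverse_on_def by (intro sum.cong) simp_all
  also have "\<dots> = B a b"
    using assms by simp
  finally show ?thesis .
qed

lemma schur_on_eq:
  assumes "finite I" "is_inverse_on I A B"
  shows "schur_on I A a b = A a b - (\<Sum>c\<in>I. \<Sum>d\<in>I. A a c * B c d * A d b)"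
  unfolding schur_on_def using inverse_on_eq[OF assms] by (simp cong: sum.cong)

locale gram_plus_ones =
  fixes I :: "'i set" and W V :: "'i \<Rightarrow> 'i \<Rightarrow> real" and g :: "'i \<Rightarrow> real"
  assumes finite_index: "finite I"
    and inverse: "is_inverse_on I W V"
    and W_g: "\<And>c. c \<in> I \<Longrightarrow> (\<Sum>p\<in>I. W c p * g p) = 1"
begin

definition ones_plus_W :: "('i \<Rightarrow> real) \<Rightarrow> 'i \<Rightarrow> real" where
  "ones_plus_W u c = 1 + (\<Sum>p\<in>I. W c p * u p)"

definition VT_g :: "'i \<Rightarrow> real" where
  "VT_g c = (\<Sum>q\<in>I. V q c * g q)"

definition g_sqnorm :: real where
  "g_sqnorm = (\<Sum>q\<in>I. g q ^ 2)"

(* V^T (Id - g g^T / (1 + |g|^2)) V, the Sherman-Morrison inverse of W (Id + g g^T) W^T = J + W W^T *)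
definition sherman_morrison :: "'i \<Rightarrow> 'i \<Rightarrow> real" where
  "sherman_morrison c d = (\<Sum>q\<in>I. V q c * V q d) - VT_g c * VT_g d / (1 + g_sqnorm)"

lemma V_ones_plus_W:
  assumes "q \<in> I"
  shows "(\<Sum>c\<in>I. V q c * ones_plus_W u c) = g q + u q"
proof -
  have "ones_plus_W u c = (\<Sum>p\<in>I. W c p * (g p + u p))" if "c \<in> I" for c
    using W_g[OF that] by (simp add: ones_plus_W_def distrib_left sum.distrib)
  then have "(\<Sum>c\<in>I. V q c * ones_plus_W u c) = (\<Sum>c\<in>I. \<Sum>p\<in>I. V q c * W c p * (g p + u p))"
    by (simp add: sum_distrib_left mult.assoc)
  also have "\<dots> = (\<Sum>p\<in>I. (\<Sum>c\<in>I. V q c * W c p) * (g p + u p))"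
    by (subst sum.swap) (simp add: sum_distrib_right)
  also have "\<dots> = (\<Sum>p\<in>I. if q = p then g p + u p else 0)"
    using inverse assms unfolding is_inverse_on_def by (intro sum.cong) simp_all
  finally show ?thesis
    using assms finite_index by simp
qed

lemma VT_g_ones_plus_W: "(\<Sum>c\<in>I. VT_g c * ones_plus_W u c) = (\<Sum>q\<in>I. g q * (g q + u q))"
proof -
  have "(\<Sum>c\<in>I. VT_g c * ones_plus_W u c) = (\<Sum>q\<in>I. g q * (\<Sum>c\<in>I. V q c * ones_plus_W u c))"
    unfolding VT_g_def sum_distrib_left sum_distrib_right
    by (subst sum.swap) (simp add: mult_ac)
  then show ?thesis
    by (simp add: V_ones_plus_W)
qed

lemma sherman_morrison_ones_plus_W:
  "(\<Sum>d\<in>I. sherman_morrison c d * ones_plus_W u d)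
     = (\<Sum>q\<in>I. V q c * (g q + u q)) - VT_g c * (\<Sum>q\<in>I. g q * (g q + u q)) / (1 + g_sqnorm)"
proof -
  have "(\<Sum>d\<in>I. sherman_morrison c d * ones_plus_W u d)
      = (\<Sum>q\<in>I. V q c * (\<Sum>d\<in>I. V q d * ones_plus_W u d))
        - VT_g c / (1 + g_sqnorm) * (\<Sum>d\<in>I. VT_g d * ones_plus_W u d)"
    unfolding sherman_morrison_def left_diff_distrib sum_subtractf sum_distrib_left sum_distrib_right
    by (subst sum.swap) (simp add: mult_ac)
  then show ?thesis
    by (simp add: V_ones_plus_W VT_g_ones_plus_W)
qed

lemma is_inverse_on_sherman_morrison:
  "is_inverse_on I (\<lambda>c d. 1 + (\<Sum>p\<in>I. W c p * W d p)) sherman_morrison"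
proof -
  have "(\<Sum>d\<in>I. sherman_morrison c d * (1 + (\<Sum>p\<in>I. W d p * W e p))) = (if c = e then 1 else 0)"
    if "c \<in> I" "e \<in> I" for c e
  proof -
    have "(\<Sum>q\<in>I. g q * (g q + W e q)) = 1 + g_sqnorm"
      using W_g[OF \<open>e \<in> I\<close>]
      by (simp add: g_sqnorm_def distrib_left sum.distrib power2_eq_square mult.commute)
    moreover have "(\<Sum>q\<in>I. V q c * (g q + W e q)) = VT_g c + (if e = c then 1 else 0)"
      using inverse that unfolding is_inverse_on_def
      by (simp add: VT_g_def distrib_left sum.distrib mult.commute)
    moreover have "0 \<le> g_sqnorm"
      unfolding g_sqnorm_def by (intro sum_nonneg) simp
    then have "1 + g_sqnorm \<noteq> 0"
      by linarith
    ultimately show ?thesis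
      using sherman_morrison_ones_plus_W[of c "W e"] by (simp add: ones_plus_W_def mult.commute)
  qed
  moreover have "sherman_morrison c d = sherman_morrison d c" for c d
    unfolding sherman_morrison_def by (simp add: mult.commute)
  ultimately show ?thesis
    unfolding is_inverse_on_def by (simp add: mult.commute)
qed

lemma quadratic_form_sherman_morrison:
  "(\<Sum>c\<in>I. \<Sum>d\<in>I. ones_plus_W u c * sherman_morrison c d * ones_plus_W v d)
     = (\<Sum>q\<in>I. (g q + u q) * (g q + v q))
       - (\<Sum>q\<in>I. g q * (g q + u q)) * (\<Sum>q\<in>I. g q * (g q + v q)) / (1 + g_sqnorm)"
  (is "_ = _ - ?Su * ?Sv / ?K")
proof -
  have "(\<Sum>c\<in>I. \<Sum>d\<in>I. ones_plus_W u c * sherman_morrison c d * ones_plus_W v d)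
      = (\<Sum>c\<in>I. ones_plus_W u c * (\<Sum>d\<in>I. sherman_morrison c d * ones_plus_W v d))"
    by (simp add: sum_distrib_left mult.assoc)
  also have "\<dots> = (\<Sum>c\<in>I. ones_plus_W u c * (\<Sum>q\<in>I. V q c * (g q + v q)) - VT_g c * ones_plus_W u c * ?Sv / ?K)"
    unfolding sherman_morrison_ones_plus_W by (simp add: right_diff_distrib mult_ac)
  also have "\<dots> = (\<Sum>c\<in>I. ones_plus_W u c * (\<Sum>q\<in>I. V q c * (g q + v q)))
      - (\<Sum>c\<in>I. VT_g c * ones_plus_W u c) * ?Sv / ?K"
    by (simp add: sum_subtractf sum_divide_distrib sum_distrib_right)
  also have "(\<Sum>c\<in>I. ones_plus_W u c * (\<Sum>q\<in>I. V q c * (g q + v q)))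
      = (\<Sum>q\<in>I. (g q + v q) * (\<Sum>c\<in>I. V q c * ones_plus_W u c))"
    unfolding sum_distrib_left sum_distrib_right by (subst sum.swap) (simp add: mult_ac)
  finally show ?thesis
    by (simp add: V_ones_plus_W VT_g_ones_plus_W mult.commute)
qed

end

lemma finite_subsets_upto: "finite (subsets_upto n r)"
  by (rule finite_subset[of _ "Pow {1..n}"]) (auto simp: subsets_upto_def)

lemma finite_mem_subsets_upto: "c \<in> subsets_upto n r \<Longrightarrow> finite c"
  by (auto simp: subsets_upto_def intro: finite_subset)

lemma subsets_upto_below:
  assumes "B \<subseteq> {1..n}" "card B \<le> r"
  shows "{p \<in> subsets_upto n r. p \<subseteq> B} = Pow B - {{}}"
  using assms finite_subset[OF assms(1)] card_mono
  by (auto simp: subsets_upto_def) (meson le_trans)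

lemma subsets_upto_below_subsets_eq:
  assumes "a \<in> subsets_eq n (Suc r)"
  shows "{p \<in> subsets_upto n r. p \<subseteq> a} = Pow a - {{}, a}"
proof -
  have "finite a" "card a = Suc r" "a \<subseteq> {1..n}"
    using assms by (auto simp: subsets_eq_def intro: finite_subset)
  then have "card p \<le> r \<longleftrightarrow> p \<noteq> a" if "p \<subseteq> a" for p
    using that psubset_card_mono[of a p] card_seteq[of a p] by (auto simp: psubset_eq)
  with \<open>a \<subseteq> {1..n}\<close> show ?thesis
    by (auto simp: subsets_upto_def)
qed

lemma sum_subset_zeta_sign:
  assumes "c \<in> subsets_upto n r"
  shows "(\<Sum>p\<in>subsets_upto n r. subset_zeta c p * (- ((-1) ^ card p))) = (1::real)"
proof -
  have "c \<subseteq> {1..n}" "c \<noteq> {}" "card c \<le> r"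
    using assms by (auto simp: subsets_upto_def)
  then show ?thesis
    using sum_neg_one_power_nonempty_subsets[OF finite_mem_subsets_upto[OF assms]]
    by (simp add: sum_subset_zeta finite_subsets_upto subsets_upto_below sum_negf)
qed

interpretation zeta_factorization:
  gram_plus_ones "subsets_upto n r" subset_zeta subset_mobius "\<lambda>p. - ((-1) ^ card p)" for n r
proof
  show "finite (subsets_upto n r)"
    by (rule finite_subsets_upto)
  show "is_inverse_on (subsets_upto n r) subset_zeta subset_mobius"
  proof (rule is_inverse_on_subset_zeta_mobius[OF finite_subsets_upto finite_mem_subsets_upto])
    fix lo m hi
    assume "lo \<in> subsets_upto n r" and hi: "hi \<in> subsets_upto n r" and "lo \<subseteq> m" "m \<subseteq> hi"
    moreover have "card m \<le> card hi"
      using card_mono[OF finite_mem_subsets_upto[OF hi] \<open>m \<subseteq> hi\<close>] .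
    ultimately show "m \<in> subsets_upto n r"
      by (auto simp: subsets_upto_def)
  qed
qed (rule sum_subset_zeta_sign)

lemma sum_subset_zeta_subsets_upto:
  assumes "B \<subseteq> {1..n}" "card B \<le> r"
  shows "(\<Sum>p\<in>subsets_upto n r. subset_zeta B p) = 2 ^ card B - 1"
proof -
  have "finite B"
    using assms(1) by (rule finite_subset) simp
  have "(\<Sum>p\<in>subsets_upto n r. subset_zeta B p) = (\<Sum>p\<in>Pow B - {{}}. 1)"
    using sum_subset_zeta[OF finite_subsets_upto, of B "\<lambda>_. 1"] subsets_upto_below[OF assms] by simp
  also have "\<dots> = 2 ^ card B - 1"
    using \<open>finite B\<close> by (simp add: card_Pow)
  finally show ?thesis .
qed

lemma Mentry_eq_one_plus_common_subsets:
  assumes "c \<inter> d \<subseteq> {1..n}" "card (c \<inter> d) \<le> r"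
  shows "Mentry c d = 1 + (\<Sum>p\<in>subsets_upto n r. subset_zeta c p * subset_zeta d p)"
proof -
  have "subset_zeta c p * subset_zeta d p = subset_zeta (c \<inter> d) p" for p
    by (simp add: subset_zeta_def)
  then show ?thesis
    using sum_subset_zeta_subsets_upto[OF assms] by (simp add: Mentry_def)
qed

lemma sum_subset_zeta_subsets_eq:
  assumes "a \<in> subsets_eq n (Suc r)"
  shows "(\<Sum>p\<in>subsets_upto n r. subset_zeta a p) = 2 ^ Suc r - 2"
proof -
  have "finite a" "card a = Suc r" "a \<noteq> {}"
    using assms by (auto simp: subsets_eq_def intro: finite_subset)
  have "(\<Sum>p\<in>subsets_upto n r. subset_zeta a p) = (\<Sum>p\<in>Pow a - {{}, a}. 1)"
    using sum_subset_zeta[OF finite_subsets_upto, of a "\<lambda>_. 1"] subsets_upto_below_subsets_eq[OF assms]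
    by simp
  also have "\<dots> = real (card (Pow a - {{}, a}))"
    by simp
  also have "card (Pow a - {{}, a}) = 2 ^ Suc r - 2"
    using \<open>finite a\<close> \<open>card a = Suc r\<close> \<open>a \<noteq> {}\<close>
    by (subst card_Diff_subset) (auto simp: card_Pow)
  finally show ?thesis
    by simp
qed

lemma Mentry_subsets_eq:
  assumes a: "a \<in> subsets_eq n (Suc r)" and b: "b \<in> subsets_eq n (Suc r)"
  shows "Mentry a b = (if a = b then 2 else 1) + (\<Sum>p\<in>subsets_upto n r. subset_zeta a p * subset_zeta b p)"
proof (cases "a = b")
  case True
  have "card a = Suc r"
    using a by (simp add: subsets_eq_def)
  moreover have idem: "subset_zeta a p * subset_zeta a p = subset_zeta a p" for p
    by (simp add: subset_zeta_def)
  ultimately show ?thesis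
    using True sum_subset_zeta_subsets_eq[OF a] by (simp only: Mentry_def idem) simp
next
  case False
  have "finite a" "finite b" "card a = Suc r" "card b = Suc r" "a \<subseteq> {1..n}"
    using a b by (auto simp: subsets_eq_def intro: finite_subset)
  then have "\<not> b \<subseteq> a"
    using False card_seteq[of a b] by auto
  then have "card (a \<inter> b) < card b"
    using \<open>finite b\<close> by (intro psubset_card_mono) auto
  with \<open>card b = Suc r\<close> \<open>a \<subseteq> {1..n}\<close> show ?thesis
    using False Mentry_eq_one_plus_common_subsets[of a b n r] by auto
qed

lemma card_subsets_upto: "real (card (subsets_upto n r)) + 1 = alpha n r"
proof -
  have "insert {} (subsets_upto n r) = (\<Union>j\<le>r. {a. a \<subseteq> {1..n} \<and> card a = j})"
    by (auto simp: subsets_upto_def)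
  moreover have "card (\<Union>j\<le>r. {a. a \<subseteq> {1..n} \<and> card a = j}) = (\<Sum>j\<le>r. n choose j)"
    by (subst card_UN_disjoint) (auto simp: n_subsets intro: finite_subset[of _ "Pow {1..n}"])
  moreover have "{} \<notin> subsets_upto n r"
    by (simp add: subsets_upto_def)
  ultimately have "card (subsets_upto n r) + 1 = (\<Sum>j\<le>r. n choose j)"
    using finite_subsets_upto by (metis Suc_eq_plus1 card_insert_disjoint)
  then show ?thesis
    unfolding alpha_def by (metis of_nat_1 of_nat_add of_nat_sum)
qed

lemma Mentry_eq_ones_plus_W:
  assumes "a \<subseteq> {1..n}" "c \<in> subsets_upto n r"
  shows "Mentry a c = zeta_factorization.ones_plus_W n r (subset_zeta a) c"
    and "Mentry c a = zeta_factorization.ones_plus_W n r (subset_zeta a) c"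
proof -
  have "card (c \<inter> a) \<le> card c" "card c \<le> r"
    using assms(2) finite_mem_subsets_upto[OF assms(2)] by (auto simp: subsets_upto_def intro: card_mono)
  then have "Mentry c a = 1 + (\<Sum>p\<in>subsets_upto n r. subset_zeta c p * subset_zeta a p)"
    using assms(1) by (intro Mentry_eq_one_plus_common_subsets) auto
  then show "Mentry c a = zeta_factorization.ones_plus_W n r (subset_zeta a) c"
    by (simp add: zeta_factorization.ones_plus_W_def)
  then show "Mentry a c = zeta_factorization.ones_plus_W n r (subset_zeta a) c"
    by (simp add: Mentry_def Int_commute)
qed

lemma is_inverse_on_Mentry:
  "is_inverse_on (subsets_upto n r) Mentry (zeta_factorization.sherman_morrison n r)"
proof -
  have "Mentry c d = 1 + (\<Sum>p\<in>subsets_upto n r. subset_zeta c p * subset_zeta d p)"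
    if "c \<in> subsets_upto n r" "d \<in> subsets_upto n r" for c d
  proof -
    have "d \<subseteq> {1..n}"
      using that(2) by (simp add: subsets_upto_def)
    then show ?thesis
      using Mentry_eq_ones_plus_W(2)[OF _ that(1)] by (simp add: zeta_factorization.ones_plus_W_def)
  qed
  then show ?thesis
    using zeta_factorization.is_inverse_on_sherman_morrison by (subst is_inverse_on_cong) auto
qed

lemma sum_sign_subset_zeta_subsets_eq:
  assumes "a \<in> subsets_eq n (Suc r)"
  shows "(\<Sum>p\<in>subsets_upto n r. - ((-1) ^ card p) * subset_zeta a p) = 1 + (-1::real) ^ Suc r"
proof -
  have "finite a" "card a = Suc r" "a \<noteq> {}"
    using assms by (auto simp: subsets_eq_def intro: finite_subset)
  have "(\<Sum>p\<in>Pow a - {{}}. (-1::real) ^ card p) = (-1) ^ card a + (\<Sum>p\<in>Pow a - {{}} - {a}. (-1) ^ card p)"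
    using \<open>finite a\<close> \<open>a \<noteq> {}\<close> by (intro sum.remove) auto
  moreover have "Pow a - {{}} - {a} = Pow a - {{}, a}"
    by auto
  ultimately have "(\<Sum>p\<in>Pow a - {{}, a}. (-1::real) ^ card p) = -1 - (-1) ^ Suc r"
    using sum_neg_one_power_nonempty_subsets[OF \<open>finite a\<close> \<open>a \<noteq> {}\<close>] \<open>card a = Suc r\<close> by simp
  moreover have "(\<Sum>p\<in>subsets_upto n r. - ((-1) ^ card p) * subset_zeta a p)
      = - (\<Sum>p\<in>Pow a - {{}, a}. (-1::real) ^ card p)"
    unfolding mult.commute[of _ "subset_zeta a _"] sum_subset_zeta[OF finite_subsets_upto]
      subsets_upto_below_subsets_eq[OF assms] by (simp add: sum_negf)
  ultimately show ?thesis
    by simp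
qed

lemma quadratic_form_Mentry_subsets_eq:
  assumes a: "a \<in> subsets_eq n (Suc r)" and b: "b \<in> subsets_eq n (Suc r)"
  defines "N \<equiv> real (card (subsets_upto n r))" and "G \<equiv> 1 + (-1::real) ^ Suc r"
  shows "(\<Sum>c\<in>subsets_upto n r. \<Sum>d\<in>subsets_upto n r.
            Mentry a c * zeta_factorization.sherman_morrison n r c d * Mentry d b)
         = N + 2 * G + (\<Sum>p\<in>subsets_upto n r. subset_zeta a p * subset_zeta b p)
           - (N + G) * (N + G) / (1 + N)"
proof -
  let ?F = "subsets_upto n r" and ?g = "\<lambda>p::nat set. - ((-1::real) ^ card p)"
  let ?za = "subset_zeta a" and ?zb = "subset_zeta b"
  let ?x = "zeta_factorization.ones_plus_W n r" and ?S = "zeta_factorization.sherman_morrison n r"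
  have "a \<subseteq> {1..n}" "b \<subseteq> {1..n}"
    using a b by (auto simp: subsets_eq_def)
  have g_sq: "?g p * ?g p = 1" for p
    by (simp flip: power_add)
  have Ga: "(\<Sum>p\<in>?F. ?g p * ?za p) = G" and Gb: "(\<Sum>p\<in>?F. ?g p * ?zb p) = G"
    using sum_sign_subset_zeta_subsets_eq[OF a] sum_sign_subset_zeta_subsets_eq[OF b]
    by (simp_all add: G_def)
  have norm: "zeta_factorization.g_sqnorm n r = N"
    by (simp add: zeta_factorization.g_sqnorm_def N_def power2_eq_square g_sq)
  have "(\<Sum>q\<in>?F. ?g q * (?g q + ?za q)) = (\<Sum>q\<in>?F. ?g q * ?g q + ?g q * ?za q)"
    "(\<Sum>q\<in>?F. ?g q * (?g q + ?zb q)) = (\<Sum>q\<in>?F. ?g q * ?g q + ?g q * ?zb q)"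
    "(\<Sum>q\<in>?F. (?g q + ?za q) * (?g q + ?zb q))
       = (\<Sum>q\<in>?F. ?g q * ?g q + ?g q * ?za q + ?g q * ?zb q + ?za q * ?zb q)"
    by (simp_all only: distrib_left distrib_right add_ac mult.commute)
  then have "(\<Sum>q\<in>?F. ?g q * (?g q + ?za q)) = N + G"
    "(\<Sum>q\<in>?F. ?g q * (?g q + ?zb q)) = N + G"
    "(\<Sum>q\<in>?F. (?g q + ?za q) * (?g q + ?zb q)) = N + 2 * G + (\<Sum>q\<in>?F. ?za q * ?zb q)"
    by (simp_all only: sum.distrib g_sq Ga Gb) (simp_all add: N_def)
  moreover have "(\<Sum>c\<in>?F. \<Sum>d\<in>?F. Mentry a c * ?S c d * Mentry d b)
      = (\<Sum>c\<in>?F. \<Sum>d\<in>?F. ?x ?za c * ?S c d * ?x ?zb d)"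
    using Mentry_eq_ones_plus_W[OF \<open>a \<subseteq> {1..n}\<close>] Mentry_eq_ones_plus_W[OF \<open>b \<subseteq> {1..n}\<close>]
    by (intro sum.cong) auto
  ultimately show ?thesis
    unfolding zeta_factorization.quadratic_form_sherman_morrison norm by simp
qed

lemma schur_on_subsets_upto_Mentry:
  assumes a: "a \<in> subsets_eq n (Suc r)" and b: "b \<in> subsets_eq n (Suc r)"
  shows "schur_on (subsets_upto n r) Mentry a b = (if a = b then 1 else 0) + 1 / alpha n r"
proof -
  define N where "N = real (card (subsets_upto n r))"
  define G where "G = 1 + (-1::real) ^ Suc r"
  define Y where "Y = (\<Sum>p\<in>subsets_upto n r. subset_zeta a p * subset_zeta b p)"
  have "schur_on (subsets_upto n r) Mentry a b
      = (if a = b then 2 else 1) + Y - (N + 2 * G + Y - (N + G) * (N + G) / (1 + N))"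
    using schur_on_eq[OF finite_subsets_upto is_inverse_on_Mentry]
      Mentry_subsets_eq[OF a b] quadratic_form_Mentry_subsets_eq[OF a b]
    by (simp add: N_def G_def Y_def)
  moreover have "(N + G) * (N + G) / (1 + N) = N - 1 + 2 * G + 1 / (1 + N)"
  proof -
    have "G * G = 2 * G"
      by (simp add: G_def algebra_simps flip: power_add)
    moreover have "1 + N > 0"
      by (simp add: N_def add_pos_nonneg)
    ultimately show ?thesis
      by (simp add: field_simps)
  qed
  moreover have "1 + N = alpha n r"
    using card_subsets_upto by (simp add: N_def add.commute)
  ultimately show ?thesis
    by simp
qed

theorem lemma7:
  fixes n t :: nat
  assumes "1 \<le> t" and "t \<le> n"
  shows "(2 \<le> t \<longrightarrow> invertible_on (subsets_upto n (t - 1)) Mentry) \<and>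
         (\<forall>a\<in>subsets_eq n t. \<forall>b\<in>subsets_eq n t.
            schur_on (subsets_upto n (t - 1)) Mentry a b
              = (if a = b then 1 else 0) + 1 / alpha n (t - 1))"
proof -
  have "t = Suc (t - 1)"
    using assms(1) by simp
  then show ?thesis
    using is_inverse_on_Mentry schur_on_subsets_upto_Mentry[of _ n "t - 1"]
    unfolding invertible_on_def by metis
qed

end
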